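(* Let $n\ge 1$. The maximum number of nonzero entries of an $n\times n\times n$ ASHM equals $m_n=\frac{n(n^2+2)}{3}$, and this maximum is attained by the diamond ASHM $\mathfrak D_n=[F_n^1,F_n^2,\ldots,F_n^n]$. Moreover, for each $k\in\{1,\ldots,n\}$: (i) if $A$ is an $n\times n$ ASM for which there exist $n\times n$ ASMs $A_1,\ldots,A_{k-1},A_{k+1},\ldots,A_n$ such that $[A_1,\ldots,A_{k-1},A,A_{k+1},\ldots,A_n]$ is an ASHM, then $A$ has at most as many nonzero entries as $F_n^k$; (ii) more precisely, for each such $A$ and each $i\in\{1,\ldots,n\}$, the number of nonzeros in row $i$ (resp. column $i$) of $A$ is at most the number of nonzeros in row $i$ (resp. column $i$) of $F_n^k$.
   Context: An $n\times n$ alternating sign matrix (ASM) is an $n\times n$ matrix with entries in $\{0,1,-1\}$ such that in every row and every column the nonzero entries alternate in sign, beginning and ending with $+1$. An $n\times n\times n$ hypermatrix $A=[a_{ijk}]$ is written $A=[A_1,\ldots,A_n]$ with $A_k=[a_{ijk}]_{i,j}$ its $k$-th horizontal plane. $A$ is an alternating sign hypermatrix (ASHM) if all entries lie in $\{0,\pm1\}$ and in every line (row line: fixed $j,k$; column line: fixed $i,k$; vertical line: fixed $i,j$) the nonzeros alternate in sign beginning and ending with $+1$; equivalently every plane obtained by fixing one index is an ASM. For $1\le k\le n$, $F_n^k=[f_{ij}]$ is the $n\times n$ matrix with $f_{ij}=(-1)^{i+j+k+1}$ if $k+1\le i+j\le 2n+1-k$ and $|i-j|\le k-1$, and $f_{ij}=0$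 otherwise (so $F_n^1=I_n$ and $F_n^n$ is the anti-diagonal permutation matrix; each $F_n^k$ is an ASM). The diamond ASHM is $\mathfrak D_n=[F_n^1,F_n^2,\ldots,F_n^n]$, which is an ASHM. *)

theory Defs
  imports Main
begin

text \<open>Matrices are functions nat => nat => int, indexed 1..n (entries outside are ignored).
  Hypermatrices are functions nat => nat => nat => int, H i j k = a_ijk, indexed 1..n.\<close>

definition alt_signs :: "int list \<Rightarrow> bool" where
  "alt_signs xs \<longleftrightarrow> odd (length xs) \<and> (\<forall>i<length xs. xs ! i = (if even i then 1 else -1))"

definition as_line :: "nat \<Rightarrow> (nat \<Rightarrow> int) \<Rightarrow> bool" where
  "as_line n f \<longleftrightarrow> (\<forall>i\<in>{1..n}. f i \<in> {-1, 0, 1}) \<and>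
     alt_signs (filter (\<lambda>x. x \<noteq> 0) (map f [1..<n+1]))"

definition is_ASM :: "nat \<Rightarrow> (nat \<Rightarrow> nat \<Rightarrow> int) \<Rightarrow> bool" where
  "is_ASM n A \<longleftrightarrow> (\<forall>i\<in>{1..n}. as_line n (\<lambda>j. A i j)) \<and> (\<forall>j\<in>{1..n}. as_line n (\<lambda>i. A i j))"

definition is_ASHM :: "nat \<Rightarrow> (nat \<Rightarrow> nat \<Rightarrow> nat \<Rightarrow> int) \<Rightarrow> bool" where
  "is_ASHM n H \<longleftrightarrow>
     (\<forall>j\<in>{1..n}. \<forall>k\<in>{1..n}. as_line n (\<lambda>i. H i j k)) \<and>
     (\<forall>i\<in>{1..n}. \<forall>k\<in>{1..n}. as_line n (\<lambda>j. H i j k)) \<and>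
     (\<forall>i\<in>{1..n}. \<forall>j\<in>{1..n}. as_line n (\<lambda>k. H i j k))"

definition nnz3 :: "nat \<Rightarrow> (nat \<Rightarrow> nat \<Rightarrow> nat \<Rightarrow> int) \<Rightarrow> nat" where
  "nnz3 n H = card {(i, j, k). i \<in> {1..n} \<and> j \<in> {1..n} \<and> k \<in> {1..n} \<and> H i j k \<noteq> 0}"

definition nnz :: "nat \<Rightarrow> (nat \<Rightarrow> nat \<Rightarrow> int) \<Rightarrow> nat" where
  "nnz n A = card {(i, j). i \<in> {1..n} \<and> j \<in> {1..n} \<and> A i j \<noteq> 0}"

definition row_nnz :: "nat \<Rightarrow> (nat \<Rightarrow> nat \<Rightarrow> int) \<Rightarrow> nat \<Rightarrow> nat" where
  "row_nnz n A i = card {j \<in> {1..n}. A i j \<noteq> 0}"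

definition col_nnz :: "nat \<Rightarrow> (nat \<Rightarrow> nat \<Rightarrow> int) \<Rightarrow> nat \<Rightarrow> nat" where
  "col_nnz n A j = card {i \<in> {1..n}. A i j \<noteq> 0}"

definition F :: "nat \<Rightarrow> nat \<Rightarrow> nat \<Rightarrow> nat \<Rightarrow> int" where
  "F n k i j = (if int k + 1 \<le> int i + int j \<and> int i + int j \<le> 2 * int n + 1 - int k
                   \<and> \<bar>int i - int j\<bar> \<le> int k - 1
                then (-1) ^ (i + j + k + 1) else 0)"

definition diamond :: "nat \<Rightarrow> nat \<Rightarrow> nat \<Rightarrow> nat \<Rightarrow> int" where
  "diamond n i j k = F n k i j"

end

theory Submission
  imports Defs
begin

text \<open>Every partial sum of an alternating sign line is 0 or 1 and the full sum is 1. Hence a \<open>-1\<close>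
  in column \<open>p\<close> of an ASM forces the row through it to have partial sum 1 both strictly left and
  strictly right of \<open>p\<close>; summing these partial sums over all rows counts the columns on either
  side, so column \<open>p\<close> has at most \<open>min (2p - 1) (2(n - p) + 1)\<close> nonzero entries. A line of an ASHM
  lies in two coordinate planes, so its count is bounded by this quantity for both of its fixed
  indices; \<open>F\<^sub>n\<^sup>k\<close> attains the bound in every row and column, and summing the bounds over
  all lines of the diamond gives \<open>n(n\<^sup>2 + 2)/3\<close>.\<close>

lemma sum_take_alt_signs:
  assumes "alt_signs ys" "m \<le> length ys"
  shows "sum_list (take m ys) = (if even m then 0 else 1)"
  using assms(2)
proof (induction m)
  case 0
  then show ?case by simp
next
  case (Suc m)
  then have "take (Suc m) ys = take m ys @ [ys ! m]"
    by (simp add: take_Suc_conv_app_nth)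
  with Suc assms(1) show ?case by (auto simp: alt_signs_def)
qed

definition nonzero_entries :: "nat \<Rightarrow> (nat \<Rightarrow> int) \<Rightarrow> int list" where
  "nonzero_entries n f = filter (\<lambda>x. x \<noteq> 0) (map f [1..<n+1])"

lemma sum_eq_sum_list_nonzero_entries: "sum f {1..n} = sum_list (nonzero_entries n f)"
proof -
  have "sum f {1..n} = sum_list (map f [1..<n+1])"
    by (metis atLeastLessThanSuc_atLeastAtMost set_upt Suc_eq_plus1 sum_set_upt_conv_sum_list_nat)
  also have "\<dots> = sum_list (nonzero_entries n f)"
    unfolding nonzero_entries_def using sum_list_map_filter[of "map f [1..<n+1]" "\<lambda>x. x \<noteq> 0" id]
    by simp
  finally show ?thesis .
qed

lemma nonzero_entries_prefix:
  assumes "t \<le> n"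
  obtains zs where "nonzero_entries n f = nonzero_entries t f @ zs"
proof
  have "[1..<n+1] = [1..<t+1] @ [t+1..<n+1]"
    using assms upt_add_eq_append[of 1 "t+1" "n-t"] by simp
  then show "nonzero_entries n f = nonzero_entries t f @ filter (\<lambda>x. x \<noteq> 0) (map f [t+1..<n+1])"
    unfolding nonzero_entries_def by simp
qed

lemma as_line_sum_prefix:
  assumes "as_line n f" "t \<le> n"
  shows "sum f {1..t} \<in> {0, 1}"
proof -
  obtain zs where zs: "nonzero_entries n f = nonzero_entries t f @ zs"
    using nonzero_entries_prefix[OF assms(2)] .
  have "alt_signs (nonzero_entries n f)"
    using assms(1) unfolding as_line_def nonzero_entries_def by simp
  then have "sum_list (take (length (nonzero_entries t f)) (nonzero_entries n f)) \<in> {0, 1}"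
    using sum_take_alt_signs[of "nonzero_entries n f" "length (nonzero_entries t f)"] zs by simp
  then show ?thesis
    using zs sum_eq_sum_list_nonzero_entries[of f t] by simp
qed

lemma as_line_sum:
  assumes "as_line n f"
  shows "sum f {1..n} = 1"
proof -
  have "alt_signs (nonzero_entries n f)"
    using assms unfolding as_line_def nonzero_entries_def by simp
  then show ?thesis
    using sum_take_alt_signs[of "nonzero_entries n f" "length (nonzero_entries n f)"]
      sum_eq_sum_list_nonzero_entries[of f n]
    by (simp add: alt_signs_def)
qed

lemma as_line_sum_split:
  assumes "as_line n f" "t \<le> n"
  shows "sum f {1..t} + sum f {Suc t..n} = 1"
proof -
  have "{1..n} = {1..t} \<union> {Suc t..n}" "{1..t} \<inter> {Suc t..n} = {}"
    using assms(2) by auto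
  then show ?thesis
    using as_line_sum[OF assms(1)] sum.union_disjoint[of "{1..t}" "{Suc t..n}" f] by simp
qed

lemma as_line_card_nonzero:
  assumes "as_line n f"
  shows "card {q \<in> {1..n}. f q \<noteq> 0} = 2 * card {q \<in> {1..n}. f q = -1} + 1"
proof -
  have vals: "f q \<in> {-1, 0, 1}" if "q \<in> {1..n}" for q
    using assms that unfolding as_line_def by blast
  have card_eq: "int (card {q \<in> {1..n}. P q}) = (\<Sum>q\<in>{1..n}. if P q then 1 else 0)" for P
    by (simp add: sum.inter_filter[symmetric])
  have "int (card {q \<in> {1..n}. f q \<noteq> 0}) = (\<Sum>q\<in>{1..n}. f q + 2 * (if f q = -1 then 1 else 0))"
    unfolding card_eq by (rule sum.cong) (use vals in auto)
  also have "\<dots> = sum f {1..n} + 2 * int (card {q \<in> {1..n}. f q = -1})"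
    unfolding card_eq by (simp add: sum.distrib sum_distrib_left)
  finally show ?thesis
    using as_line_sum[OF assms] by linarith
qed

definition line_bound :: "nat \<Rightarrow> nat \<Rightarrow> nat" where
  "line_bound n p = min (2 * p - 1) (2 * (n - p) + 1)"

lemma is_ASM_transpose: "is_ASM n A \<Longrightarrow> is_ASM n (\<lambda>i j. A j i)"
  unfolding is_ASM_def by simp

lemma col_nnz_transpose: "col_nnz n (\<lambda>i j. A j i) i = row_nnz n A i"
  unfolding row_nnz_def col_nnz_def ..

lemma ASM_row_sums_at_minus_one:
  assumes A: "is_ASM n A" and m: "m \<in> {1..n}" and p: "p \<in> {1..n}" and "A m p = -1"
  shows "sum (A m) {1..p-1} = 1" "sum (A m) {Suc p..n} = 1"
proof -
  have row: "as_line n (A m)"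
    using A m unfolding is_ASM_def by simp
  have "sum (A m) {1..p} = A m p + sum (A m) {1..p-1}"
    using p sum.cl_ivl_Suc[of "A m" 1 "p-1"] by simp
  moreover have "sum (A m) {1..p} \<in> {0, 1}" "sum (A m) {1..p-1} \<in> {0, 1}"
    using as_line_sum_prefix[OF row, of p] as_line_sum_prefix[OF row, of "p-1"] p by auto
  ultimately show "sum (A m) {1..p-1} = 1" and "sum (A m) {Suc p..n} = 1"
    using \<open>A m p = -1\<close> as_line_sum_split[OF row, of p] p by auto
qed

text \<open>Double counting: the partial row sums over a set of columns add up to the number of
  those columns, since every column sums to 1.\<close>
lemma ASM_card_rows_le:
  assumes A: "is_ASM n A" and Q: "Q \<subseteq> {1..n}" and N: "N \<subseteq> {1..n}"
    and one: "\<And>m. m \<in> N \<Longrightarrow> sum (A m) Q = 1"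
    and nonneg: "\<And>m. m \<in> {1..n} \<Longrightarrow> sum (A m) Q \<ge> 0"
  shows "card N \<le> card Q"
proof -
  have "int (card N) = (\<Sum>m\<in>N. sum (A m) Q)"
    using one by simp
  also have "\<dots> \<le> (\<Sum>m\<in>{1..n}. sum (A m) Q)"
    by (rule sum_mono2) (use N nonneg in auto)
  also have "\<dots> = (\<Sum>q\<in>Q. \<Sum>m\<in>{1..n}. A m q)"
    by (rule sum.swap)
  also have "\<dots> = int (card Q)"
    using A Q as_line_sum unfolding is_ASM_def by (simp add: subset_iff)
  finally show ?thesis by simp
qed

lemma ASM_col_nnz_le:
  assumes A: "is_ASM n A" and p: "p \<in> {1..n}"
  shows "col_nnz n A p \<le> line_bound n p"
proof -
  define N where "N = {m \<in> {1..n}. A m p = -1}"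
  have rows: "as_line n (A m)" if "m \<in> {1..n}" for m
    using A that unfolding is_ASM_def by simp
  have "col_nnz n A p = 2 * card N + 1"
    using A p as_line_card_nonzero[of n "\<lambda>m. A m p"]
    unfolding N_def col_nnz_def is_ASM_def by simp
  moreover have "card N \<le> card {1..p-1}"
  proof (rule ASM_card_rows_le[OF A])
    show "sum (A m) {1..p-1} = 1" if "m \<in> N" for m
      using that p ASM_row_sums_at_minus_one(1)[OF A _ p] unfolding N_def by blast
    show "sum (A m) {1..p-1} \<ge> 0" if "m \<in> {1..n}" for m
      using as_line_sum_prefix[OF rows[OF that], of "p-1"] p by (auto simp: le_diff_conv)
  qed (use p in \<open>auto simp: N_def\<close>)
  moreover have "card N \<le> card {Suc p..n}"
  proof (rule ASM_card_rows_le[OF A])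
    show "sum (A m) {Suc p..n} = 1" if "m \<in> N" for m
      using that p ASM_row_sums_at_minus_one(2)[OF A _ p] unfolding N_def by blast
    show "sum (A m) {Suc p..n} \<ge> 0" if "m \<in> {1..n}" for m
      using as_line_sum_prefix[OF rows[OF that], of p] as_line_sum_split[OF rows[OF that], of p] p
      by auto
  qed (use p in \<open>auto simp: N_def\<close>)
  ultimately show ?thesis
    unfolding line_bound_def using p by auto
qed

lemma ASM_row_nnz_le:
  assumes "is_ASM n A" "p \<in> {1..n}"
  shows "row_nnz n A p \<le> line_bound n p"
  using ASM_col_nnz_le[OF is_ASM_transpose[OF assms(1)] assms(2)]
  by (simp only: col_nnz_transpose)

lemma is_ASHM_planes:
  assumes "is_ASHM n H"
  shows "i \<in> {1..n} \<Longrightarrow> is_ASM n (\<lambda>j k. H i j k)"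
    and "j \<in> {1..n} \<Longrightarrow> is_ASM n (\<lambda>i k. H i j k)"
    and "k \<in> {1..n} \<Longrightarrow> is_ASM n (\<lambda>i j. H i j k)"
  using assms unfolding is_ASHM_def is_ASM_def by auto

lemma ASHM_row_nnz_le:
  assumes H: "is_ASHM n H" and i: "i \<in> {1..n}" and k: "k \<in> {1..n}"
  shows "row_nnz n (\<lambda>i j. H i j k) i \<le> min (line_bound n i) (line_bound n k)"
proof -
  have "row_nnz n (\<lambda>i j. H i j k) i = col_nnz n (\<lambda>j k. H i j k) k"
    unfolding row_nnz_def col_nnz_def ..
  then show ?thesis
    using ASM_row_nnz_le[OF is_ASHM_planes(3)[OF H k] i]
      ASM_col_nnz_le[OF is_ASHM_planes(1)[OF H i] k] by simp
qed

lemma ASHM_col_nnz_le: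
  assumes H: "is_ASHM n H" and j: "j \<in> {1..n}" and k: "k \<in> {1..n}"
  shows "col_nnz n (\<lambda>i j. H i j k) j \<le> min (line_bound n j) (line_bound n k)"
proof -
  have "col_nnz n (\<lambda>i j. H i j k) j = col_nnz n (\<lambda>i k. H i j k) k"
    unfolding col_nnz_def ..
  then show ?thesis
    using ASM_col_nnz_le[OF is_ASHM_planes(3)[OF H k] j]
      ASM_col_nnz_le[OF is_ASHM_planes(2)[OF H j] k] by simp
qed

lemma as_line_alternating_interval:
  assumes "1 \<le> lo" "lo \<le> hi" "hi \<le> n" "even (lo + c)" "even (hi + c)"
  shows "as_line n (\<lambda>x. if lo \<le> x \<and> x \<le> hi then (-1) ^ (x + c) else 0)"
    (is "as_line n ?g")
proof -
  have split: "[1..<n+1] = [1..<lo] @ [lo..<hi+1] @ [hi+1..<n+1]"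
    using assms(1-3) upt_add_eq_append[of 1 lo "n+1-lo"] upt_add_eq_append[of lo "hi+1" "n-hi"]
    by simp
  have "map ?g [lo..<hi+1] = map (\<lambda>x. (-1) ^ (x + c)) [lo..<hi+1]"
    by (rule map_cong) auto
  then have nonzeros: "filter (\<lambda>x. x \<noteq> 0) (map ?g [1..<n+1]) = map (\<lambda>x. (-1) ^ (x + c)) [lo..<hi+1]"
    unfolding split by (auto simp: filter_empty_conv)
  have "map (\<lambda>x. (-1::int) ^ (x + c)) [lo..<hi+1] ! i = (if even i then 1 else -1)"
    if "i < hi + 1 - lo" for i
    using that assms(4) by (simp add: minus_one_power_iff del: upt_Suc)
  moreover have "odd (hi + 1 - lo)"
    using assms(2,4,5) by presburger
  ultimately have "alt_signs (map (\<lambda>x. (-1::int) ^ (x + c)) [lo..<hi+1])"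
    unfolding alt_signs_def by (simp del: upt_Suc)
  moreover have "?g x \<in> {-1, 0, 1}" for x
    by (simp add: minus_one_power_iff)
  ultimately show ?thesis
    unfolding as_line_def nonzeros by simp
qed

text \<open>The support of the diamond, written symmetrically in the three coordinates.\<close>
definition diamond_cell :: "nat \<Rightarrow> nat \<Rightarrow> nat \<Rightarrow> nat \<Rightarrow> bool" where
  "diamond_cell n i j k \<longleftrightarrow> i < j + k \<and> j < i + k \<and> k < i + j \<and> i + j + k \<le> 2 * n + 1"

lemma F_eq_diamond_cell: "F n k i j = (if diamond_cell n i j k then (-1) ^ (i + j + k + 1) else 0)"
proof -
  have "int k + 1 \<le> int i + int j \<and> int i + int j \<le> 2 * int n + 1 - int k
          \<and> \<bar>int i - int j\<bar> \<le> int k - 1 \<longleftrightarrow> diamond_cell n i j k"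
    unfolding diamond_cell_def by linarith
  then show ?thesis
    unfolding F_def by (simp only:)
qed

lemma diamond_cell_commute:
  "diamond_cell n i j k = diamond_cell n j i k" "diamond_cell n i j k = diamond_cell n i k j"
  unfolding diamond_cell_def by auto

lemma diamond_cell_range: "diamond_cell n i j k \<Longrightarrow> k \<in> {1..n}"
  unfolding diamond_cell_def by auto

lemma diamond_cell_iff_interval:
  assumes "a \<in> {1..n}" "b \<in> {1..n}"
  shows "diamond_cell n a b x \<longleftrightarrow> max a b - min a b + 1 \<le> x \<and> x \<le> min (a + b - 1) (2 * n + 1 - a - b)"
  using assms unfolding diamond_cell_def by auto

lemma as_line_diamond:
  assumes "a \<in> {1..n}" "b \<in> {1..n}"
  shows "as_line n (\<lambda>x. if diamond_cell n a b x then (-1) ^ (a + b + x + 1) else 0)"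
proof -
  have "as_line n (\<lambda>x. if max a b - min a b + 1 \<le> x \<and> x \<le> min (a + b - 1) (2 * n + 1 - a - b)
                        then (-1) ^ (x + (a + b + 1)) else 0)"
  proof (rule as_line_alternating_interval)
    have "max a b - min a b + 1 + (a + b + 1) = 2 * max a b + 2"
      by (simp add: max_def min_def)
    then show "even (max a b - min a b + 1 + (a + b + 1))"
      by simp
    have "min (a + b - 1) (2 * n + 1 - a - b) + (a + b + 1) = 2 * min (a + b) (n + 1)"
      using assms by (auto simp: min_def)
    then show "even (min (a + b - 1) (2 * n + 1 - a - b) + (a + b + 1))"
      by simp
  qed (use assms in auto)
  moreover have "a + b + x + 1 = x + (a + b + 1)" for x
    by simp
  ultimately show ?thesis
    using diamond_cell_iff_interval[OF assms] by presburger
qed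

lemma is_ASHM_diamond: "is_ASHM n (diamond n)"
  unfolding is_ASHM_def
proof (intro conjI ballI)
  fix a b
  assume "a \<in> {1..n}" "b \<in> {1..n}"
  note line = as_line_diamond[OF this]
  have "(\<lambda>i. diamond n i a b) = (\<lambda>x. if diamond_cell n a b x then (-1) ^ (a + b + x + 1) else 0)"
  proof
    fix x
    show "diamond n x a b = (if diamond_cell n a b x then (-1) ^ (a + b + x + 1) else 0)"
      using diamond_cell_commute(1)[of n x a b] diamond_cell_commute(2)[of n a x b]
      by (simp add: diamond_def F_eq_diamond_cell ac_simps)
  qed
  then show "as_line n (\<lambda>i. diamond n i a b)"
    using line by simp
  have "(\<lambda>j. diamond n a j b) = (\<lambda>x. if diamond_cell n a b x then (-1) ^ (a + b + x + 1) else 0)"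
  proof
    fix x
    show "diamond n a x b = (if diamond_cell n a b x then (-1) ^ (a + b + x + 1) else 0)"
      using diamond_cell_commute(2)[of n a x b] by (simp add: diamond_def F_eq_diamond_cell ac_simps)
  qed
  then show "as_line n (\<lambda>j. diamond n a j b)"
    using line by simp
  have "(\<lambda>k. diamond n a b k) = (\<lambda>x. if diamond_cell n a b x then (-1) ^ (a + b + x + 1) else 0)"
    by (simp add: diamond_def F_eq_diamond_cell)
  then show "as_line n (\<lambda>k. diamond n a b k)"
    using line by simp
qed

lemma int_line_bound: "p \<in> {1..n} \<Longrightarrow> int (line_bound n p) = int n - \<bar>int n + 1 - 2 * int p\<bar>"
  unfolding line_bound_def by (auto simp: min_def of_nat_diff)

lemma int_min_line_bound:
  assumes "i \<in> {1..n}" "k \<in> {1..n}"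
  shows "int (min (line_bound n i) (line_bound n k)) = int n - \<bar>int n + 1 - int i - int k\<bar> - \<bar>int i - int k\<bar>"
  using int_line_bound[OF assms(1)] int_line_bound[OF assms(2)] by (simp add: of_nat_min)

lemma row_nnz_F:
  assumes "i \<in> {1..n}" "k \<in> {1..n}"
  shows "row_nnz n (F n k) i = min (line_bound n i) (line_bound n k)"
proof -
  have "{j \<in> {1..n}. F n k i j \<noteq> 0} = {j. diamond_cell n i k j}"
    using diamond_cell_range[of n i k] diamond_cell_commute(2)[of n i _ k]
    by (auto simp: F_eq_diamond_cell)
  also have "\<dots> = {max i k - min i k + 1 .. min (i + k - 1) (2 * n + 1 - i - k)}"
    by (rule set_eqI) (simp only: mem_Collect_eq atLeastAtMost_iff diamond_cell_iff_interval[OF assms])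
  finally have "int (row_nnz n (F n k) i)
      = int (Suc (min (i + k - 1) (2 * n + 1 - i - k)) - (max i k - min i k + 1))"
    unfolding row_nnz_def by simp
  also have "\<dots> = int n - \<bar>int n + 1 - int i - int k\<bar> - \<bar>int i - int k\<bar>"
    using assms by (simp add: min_def max_def of_nat_diff)
  also have "\<dots> = int (min (line_bound n i) (line_bound n k))"
    using int_min_line_bound[OF assms] by simp
  finally show ?thesis
    by simp
qed

lemma col_nnz_F: "col_nnz n (F n k) j = row_nnz n (F n k) j"
proof -
  have "F n k i j = F n k j i" for i j
    by (simp add: F_eq_diamond_cell diamond_cell_commute(1) ac_simps)
  then show ?thesis
    unfolding col_nnz_def row_nnz_def by simp
qed

lemma nnz_eq_sum_row_nnz: "nnz n A = (\<Sum>i\<in>{1..n}. row_nnz n A i)"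
proof -
  have "{(i, j). i \<in> {1..n} \<and> j \<in> {1..n} \<and> A i j \<noteq> 0} = Sigma {1..n} (\<lambda>i. {j \<in> {1..n}. A i j \<noteq> 0})"
    by auto
  then show ?thesis
    unfolding nnz_def row_nnz_def by (simp add: card_SigmaI)
qed

lemma nnz3_eq_sum_nnz: "nnz3 n H = (\<Sum>k\<in>{1..n}. nnz n (\<lambda>i j. H i j k))"
proof -
  have "{(i, j, k). i \<in> {1..n} \<and> j \<in> {1..n} \<and> k \<in> {1..n} \<and> H i j k \<noteq> 0}
      = (\<lambda>(k, i, j). (i, j, k)) ` (SIGMA k:{1..n}. {(i, j). i \<in> {1..n} \<and> j \<in> {1..n} \<and> H i j k \<noteq> 0})"
    by force
  moreover have "inj (\<lambda>(k :: nat, i :: nat, j :: nat). (i, j, k))"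
    by (auto simp: inj_def)
  moreover have "finite {(i, j). i \<in> {1..n} \<and> j \<in> {1..n} \<and> H i j k \<noteq> 0}" for k
    by (rule finite_subset[of _ "{1..n} \<times> {1..n}"]) auto
  ultimately show ?thesis
    unfolding nnz3_def nnz_def by (simp add: card_image inj_on_def card_SigmaI)
qed

lemma sum_abs_diff: "3 * (\<Sum>i\<in>{1..n}. \<Sum>k\<in>{1..n}. \<bar>int i - int k\<bar>) = int n ^ 3 - int n"
proof (induction n)
  case 0
  then show ?case by simp
next
  case (Suc n)
  have ins: "{1..Suc n} = insert (Suc n) {1..n}"
    by auto
  have last_row: "2 * (\<Sum>k\<in>{1..n}. int n + 1 - int k) = int n * (int n + 1)"
    using double_gauss_sum_from_Suc_0[of n, where 'a=int] by (simp add: sum_subtractf algebra_simps)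
  have "(\<Sum>i\<in>{1..Suc n}. \<Sum>k\<in>{1..Suc n}. \<bar>int i - int k\<bar>)
      = 2 * (\<Sum>k\<in>{1..n}. int n + 1 - int k) + (\<Sum>i\<in>{1..n}. \<Sum>k\<in>{1..n}. \<bar>int i - int k\<bar>)"
    unfolding ins by (simp add: sum.distrib sum_distrib_left) (auto intro!: sum.cong)
  then show ?case
    using Suc.IH last_row by (simp add: algebra_simps power3_eq_cube)
qed

lemma sum_min_line_bound:
  "3 * (\<Sum>k\<in>{1..n}. \<Sum>i\<in>{1..n}. int (min (line_bound n i) (line_bound n k))) = int n ^ 3 + 2 * int n"
proof -
  have reflect: "(\<Sum>k\<in>{1..n}. \<Sum>i\<in>{1..n}. \<bar>int n + 1 - int i - int k\<bar>)
      = (\<Sum>k\<in>{1..n}. \<Sum>i\<in>{1..n}. \<bar>int i - int k\<bar>)"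
  proof (rule sum.cong[OF refl])
    fix k
    have "(\<Sum>i\<in>{1..n}. \<bar>int n + 1 - int i - int k\<bar>) = (\<Sum>i\<in>{1..n}. \<bar>int n + 1 - int (n + 1 - i) - int k\<bar>)"
      using sum.atLeastAtMost_rev[of "\<lambda>i. \<bar>int n + 1 - int i - int k\<bar>" 1 n] by simp
    also have "\<dots> = (\<Sum>i\<in>{1..n}. \<bar>int i - int k\<bar>)"
      by (rule sum.cong) (auto simp: of_nat_diff)
    finally show "(\<Sum>i\<in>{1..n}. \<bar>int n + 1 - int i - int k\<bar>) = (\<Sum>i\<in>{1..n}. \<bar>int i - int k\<bar>)" .
  qed
  have "(\<Sum>k\<in>{1..n}. \<Sum>i\<in>{1..n}. int (min (line_bound n i) (line_bound n k)))
      = (\<Sum>k\<in>{1..n}. \<Sum>i\<in>{1..n}. int n - \<bar>int n + 1 - int i - int k\<bar> - \<bar>int i - int k\<bar>)"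
    by (intro sum.cong refl) (simp add: int_min_line_bound)
  also have "\<dots> = int n ^ 3 - 2 * (\<Sum>k\<in>{1..n}. \<Sum>i\<in>{1..n}. \<bar>int i - int k\<bar>)"
    using reflect by (simp add: sum_subtractf power3_eq_cube)
  finally show ?thesis
    using sum_abs_diff[of n] sum.swap[of "\<lambda>i k. \<bar>int i - int k\<bar>" "{1..n}" "{1..n}"] by simp
qed

lemma nnz3_diamond: "3 * nnz3 n (diamond n) = n * (n^2 + 2)"
proof -
  have "int (nnz3 n (diamond n)) = (\<Sum>k\<in>{1..n}. \<Sum>i\<in>{1..n}. int (min (line_bound n i) (line_bound n k)))"
    unfolding nnz3_eq_sum_nnz nnz_eq_sum_row_nnz diamond_def by (simp add: row_nnz_F)
  then have "int (3 * nnz3 n (diamond n)) = int (n * (n^2 + 2))"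
    using sum_min_line_bound[of n] by (simp add: algebra_simps power2_eq_square power3_eq_cube)
  then show ?thesis
    by (simp only: of_nat_eq_iff)
qed

lemma ASHM_plane_nnz_le_F:
  assumes H: "is_ASHM n H" and k: "k \<in> {1..n}"
    and A: "\<forall>i\<in>{1..n}. \<forall>j\<in>{1..n}. H i j k = A i j"
  shows "\<forall>i\<in>{1..n}. row_nnz n A i \<le> row_nnz n (F n k) i \<and> col_nnz n A i \<le> col_nnz n (F n k) i"
    and "nnz n A \<le> nnz n (F n k)"
proof -
  have "row_nnz n A i = row_nnz n (\<lambda>i j. H i j k) i" "col_nnz n A i = col_nnz n (\<lambda>i j. H i j k) i"
    if "i \<in> {1..n}" for i
    using A that unfolding row_nnz_def col_nnz_def by (auto intro!: arg_cong[where f = card])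
  then show lines: "\<forall>i\<in>{1..n}. row_nnz n A i \<le> row_nnz n (F n k) i \<and> col_nnz n A i \<le> col_nnz n (F n k) i"
    using ASHM_row_nnz_le[OF H _ k] ASHM_col_nnz_le[OF H _ k] row_nnz_F[OF _ k] col_nnz_F by simp
  show "nnz n A \<le> nnz n (F n k)"
    unfolding nnz_eq_sum_row_nnz by (rule sum_mono) (use lines in simp)
qed

lemma nnz3_le_diamond:
  assumes "is_ASHM n H"
  shows "nnz3 n H \<le> nnz3 n (diamond n)"
  unfolding nnz3_eq_sum_nnz diamond_def
  by (rule sum_mono) (use ASHM_plane_nnz_le_F(2)[OF assms] in simp)

theorem mainTheorem2:
  fixes n :: nat
  assumes "n \<ge> 1"
  shows "Max {nnz3 n H | H. is_ASHM n H} = n * (n^2 + 2) div 3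
    \<and> is_ASHM n (diamond n) \<and> nnz3 n (diamond n) = n * (n^2 + 2) div 3
    \<and> (\<forall>k\<in>{1..n}. \<forall>A. is_ASM n A \<and>
          (\<exists>H. is_ASHM n H \<and> (\<forall>i\<in>{1..n}. \<forall>j\<in>{1..n}. H i j k = A i j))
        \<longrightarrow> nnz n A \<le> nnz n (F n k)
          \<and> (\<forall>i\<in>{1..n}. row_nnz n A i \<le> row_nnz n (F n k) i
                        \<and> col_nnz n A i \<le> col_nnz n (F n k) i))"
proof -
  have count: "nnz3 n (diamond n) = n * (n^2 + 2) div 3"
    using nnz3_diamond[of n] by simp
  have "Max {nnz3 n H | H. is_ASHM n H} = nnz3 n (diamond n)"
  proof (rule Max_eqI)
    show "finite {nnz3 n H | H. is_ASHM n H}"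
      by (rule finite_subset[of _ "{..nnz3 n (diamond n)}"]) (use nnz3_le_diamond in auto)
  qed (use nnz3_le_diamond is_ASHM_diamond in auto)
  then show ?thesis
    using count is_ASHM_diamond ASHM_plane_nnz_le_F by auto
qed

end
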